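(* Let $\Gamma\leq\mathrm{PSL}_2(\mathbb{R})$ be an infinitely generated Fuchsian group containing no elliptic elements. Then $\Gamma$ has no finite geodesic cover (corresponding to any locally finite fundamental domain).
   Context: $\Gamma$ acts on the upper half plane $\mathbb{H}^2$ by Möbius transformations; $d_{\mathbb{H}^2}$ is the hyperbolic metric. A fundamental domain of $\Gamma$ is a closed set $F\subset\mathbb{H}^2$ whose $\Gamma$-translates cover $\mathbb{H}^2$ and whose interior contains no two distinct points of the same $\Gamma$-orbit; it is locally finite if every compact subset of $\mathbb{H}^2$ meets only finitely many translates $\gamma\cdot F$. A subset $\Gamma_0\subset\Gamma$ containing the identity is a geodesic cover of $\Gamma$ corresponding to $F$ if for all $p,q\in F$, $\min_{\gamma\in\Gamma}d_{\mathbb{H}^2}(p,\gamma\cdot q)=\min_{\gamma\in\Gamma_0}d_{\mathbb{H}^2}(p,\gamma\cdot q)$. *)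

theory Defs
  imports "HOL-Analysis.Analysis"
begin

text \<open>Elements of PSL(2,R) are represented by matrices in SL(2,R); a subgroup
  Gamma of PSL(2,R) is represented by its full preimage G in SL(2,R)
  (a subgroup of SL(2,R) containing -I).\<close>

type_synonym mat2 = "real^2^2"

definition SL2 :: "mat2 set" where
  "SL2 = {A. det A = 1}"

definition upper_half_plane :: "complex set" where
  "upper_half_plane = {z. Im z > 0}"

definition mobius :: "mat2 \<Rightarrow> complex \<Rightarrow> complex" where
  "mobius A z = (complex_of_real (A$1$1) * z + complex_of_real (A$1$2)) /
                (complex_of_real (A$2$1) * z + complex_of_real (A$2$2))"

definition hdist :: "complex \<Rightarrow> complex \<Rightarrow> real" where
  "hdist z w = arcosh (1 + (cmod (z - w))^2 / (2 * Im z * Im w))"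

definition psl2_subgroup :: "mat2 set \<Rightarrow> bool" where
  "psl2_subgroup G \<longleftrightarrow> G \<subseteq> SL2 \<and> mat 1 \<in> G \<and> - mat 1 \<in> G \<and>
     (\<forall>A\<in>G. \<forall>B\<in>G. A ** B \<in> G) \<and> (\<forall>A\<in>G. matrix_inv A \<in> G)"

text \<open>Fuchsian group: discrete subgroup of PSL(2,R) (discreteness of the
  image in PSL(2,R) is equivalent to discreteness of the preimage in SL(2,R)).\<close>
definition fuchsian :: "mat2 set \<Rightarrow> bool" where
  "fuchsian G \<longleftrightarrow> psl2_subgroup G \<and>
     (\<forall>A\<in>G. \<exists>e>0. \<forall>B\<in>G. dist A B < e \<longrightarrow> B = A)"

inductive_set generated :: "mat2 set \<Rightarrow> mat2 set" for S where
  gen_one: "mat 1 \<in> generated S"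
| gen_mult: "A \<in> generated S \<Longrightarrow> s \<in> S \<Longrightarrow> A ** s \<in> generated S"
| gen_mult_inv: "A \<in> generated S \<Longrightarrow> s \<in> S \<Longrightarrow> A ** matrix_inv s \<in> generated S"

text \<open>The subgroup of PSL(2,R) with preimage G is finitely generated iff
  G is generated by the lifts of finitely many elements together with -I.\<close>
definition finitely_generated_psl :: "mat2 set \<Rightarrow> bool" where
  "finitely_generated_psl G \<longleftrightarrow>
     (\<exists>S. finite S \<and> S \<subseteq> G \<and> G = generated (insert (- mat 1) S))"

definition elliptic :: "mat2 \<Rightarrow> bool" where
  "elliptic A \<longleftrightarrow> \<bar>trace A\<bar> < 2"

definition fundamental_domain :: "mat2 set \<Rightarrow> complex set \<Rightarrow> bool" where
  "fundamental_domain G F \<longleftrightarrow>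
     F \<subseteq> upper_half_plane \<and> closedin (top_of_set upper_half_plane) F \<and>
     (\<Union>A\<in>G. mobius A ` F) = upper_half_plane \<and>
     (\<forall>z\<in>interior F. \<forall>w\<in>interior F. \<forall>A\<in>G. mobius A z = w \<longrightarrow> z = w)"

definition locally_finite_fd :: "mat2 set \<Rightarrow> complex set \<Rightarrow> bool" where
  "locally_finite_fd G F \<longleftrightarrow> fundamental_domain G F \<and>
     (\<forall>K. compact K \<and> K \<subseteq> upper_half_plane \<longrightarrow>
        finite {A\<in>G. mobius A ` F \<inter> K \<noteq> {}})"

definition geodesic_cover :: "mat2 set \<Rightarrow> complex set \<Rightarrow> mat2 set \<Rightarrow> bool" where
  "geodesic_cover G F G0 \<longleftrightarrow> G0 \<subseteq> G \<and> (mat 1 \<in> G0 \<or> - mat 1 \<in> G0) \<and>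
     (\<forall>p\<in>F. \<forall>q\<in>F. (INF A\<in>G. hdist p (mobius A q)) = (INF A\<in>G0. hdist p (mobius A q)))"

end

theory Submission imports Defs begin

text \<open>Let \<open>F\<close> be a locally finite fundamental domain. Its neighbours, the elements \<open>A\<close> with
  \<open>A F \<inter> F \<noteq> {}\<close>, generate the group: the set of points lying in a translate of \<open>F\<close> by the
  subgroup they generate is open and closed in the connected half plane, by local finiteness.
  If \<open>G\<^sub>0\<close> is a finite geodesic cover and \<open>A\<close> maps \<open>q \<in> F\<close> to \<open>p \<in> F\<close>, the distance from
  \<open>p\<close> to the orbit of \<open>q\<close> is \<open>0\<close>, so it is attained by some \<open>A\<^sub>0 \<in> G\<^sub>0\<close>; as there are no
  elliptic elements, point stabilisers are trivial in PSL(2,R), hence \<open>A = \<plusminus>A\<^sub>0\<close>.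
  So \<open>\<plusminus>G\<^sub>0\<close> would be a finite generating set.\<close>

lemma SL2_matrix_inv:
  assumes "A \<in> SL2"
  shows "A ** matrix_inv A = mat 1" "matrix_inv A ** A = mat 1" "matrix_inv A \<in> SL2"
proof -
  have "invertible A" using assms by (simp add: SL2_def invertible_det_nz)
  then have "\<exists>A'. A ** A' = mat 1 \<and> A' ** A = mat 1" unfolding invertible_def by blast
  then have inv: "A ** matrix_inv A = mat 1 \<and> matrix_inv A ** A = mat 1"
    unfolding matrix_inv_def by (rule someI_ex)
  then show "A ** matrix_inv A = mat 1" "matrix_inv A ** A = mat 1" by auto
  have "det A * det (matrix_inv A) = 1" using inv by (metis det_I det_mul)
  then show "matrix_inv A \<in> SL2" using assms by (simp add: SL2_def)
qed

lemma neg_mat1_mult: "(- mat 1) ** (A::mat2) = - A"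
  by (simp add: vec_eq_iff matrix_matrix_mult_def sum_2 mat_def forall_2)

lemma mult_neg_mat1: "(A::mat2) ** (- mat 1) = - A"
  by (simp add: vec_eq_iff matrix_matrix_mult_def sum_2 mat_def forall_2)

lemma matrix_mult_2_entries: "((A::mat2) ** B)$i$j = A$i$1 * B$1$j + A$i$2 * B$2$j"
  by (simp add: matrix_matrix_mult_def sum_2)

lemma trace_2: "trace (A::mat2) = A$1$1 + A$2$2"
  by (simp add: trace_def sum_2)

lemma psl2_subgroupD:
  assumes "psl2_subgroup G"
  shows "G \<subseteq> SL2" "mat 1 \<in> G" "- mat 1 \<in> G"
    and "A \<in> G \<Longrightarrow> B \<in> G \<Longrightarrow> A ** B \<in> G" "A \<in> G \<Longrightarrow> matrix_inv A \<in> G"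
  using assms by (auto simp: psl2_subgroup_def)

lemma psl2_subgroup_uminus: "psl2_subgroup G \<Longrightarrow> A \<in> G \<Longrightarrow> - A \<in> G"
  by (metis neg_mat1_mult psl2_subgroupD(3,4))

lemma generated_subset:
  assumes "psl2_subgroup G" "S \<subseteq> G"
  shows "generated S \<subseteq> G"
proof
  fix A assume "A \<in> generated S"
  then show "A \<in> G"
    by induction (use assms psl2_subgroupD[OF assms(1)] in auto)
qed

lemma generated_mono:
  assumes "S \<subseteq> T"
  shows "generated S \<subseteq> generated T"
proof
  fix A assume "A \<in> generated S"
  then show "A \<in> generated T"
    by induction (use assms in \<open>auto intro: generated.intros\<close>)
qed

lemma mobius_denom_nonzero:
  assumes "A \<in> SL2" "z \<in> upper_half_plane"
  shows "complex_of_real (A$2$1) * z + complex_of_real (A$2$2) \<noteq> 0"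
proof
  assume h: "complex_of_real (A$2$1) * z + complex_of_real (A$2$2) = 0"
  have "Im z > 0" using assms(2) by (simp add: upper_half_plane_def)
  from arg_cong[OF h, of Im] have "A$2$1 * Im z = 0" by simp
  then have c: "A$2$1 = 0" using \<open>Im z > 0\<close> by simp
  from arg_cong[OF h, of Re] c have "A$2$2 = 0" by simp
  with c assms(1) show False by (simp add: SL2_def det_2)
qed

lemma mobius_in_upper_half_plane:
  assumes "A \<in> SL2" "z \<in> upper_half_plane"
  shows "mobius A z \<in> upper_half_plane"
proof -
  define num where "num = complex_of_real (A$1$1) * z + complex_of_real (A$1$2)"
  define den where "den = complex_of_real (A$2$1) * z + complex_of_real (A$2$2)"
  have "den \<noteq> 0" unfolding den_def by (rule mobius_denom_nonzero[OF assms])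
  then have "(Re den)^2 + (Im den)^2 > 0"
    by (simp add: complex_eq_iff sum_power2_gt_zero_iff)
  moreover have "Im num * Re den - Re num * Im den = Im z"
    using assms(1) by (simp add: num_def den_def SL2_def det_2 algebra_simps)
  moreover have "Im z > 0" using assms(2) by (simp add: upper_half_plane_def)
  ultimately show ?thesis
    by (simp add: mobius_def upper_half_plane_def Im_divide flip: num_def den_def)
qed

lemma mobius_mult:
  assumes "B \<in> SL2" "z \<in> upper_half_plane"
  shows "mobius (A ** B) z = mobius A (mobius B z)"
proof -
  have frac: "(a*(n/d)+b)/(c*(n/d)+e) = (a*n+b*d)/(c*n+e*d)" if "d \<noteq> 0" for a b c d e n :: complex
  proof -
    have "a*(n/d)+b = (a*n+b*d)/d" "c*(n/d)+e = (c*n+e*d)/d" using that by (simp_all add: field_simps)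
    then show ?thesis using that by simp
  qed
  show ?thesis unfolding mobius_def matrix_mult_2_entries frac[OF mobius_denom_nonzero[OF assms]]
    by (simp add: algebra_simps)
qed

lemma mobius_id: "mobius (mat 1) z = z"
  by (simp add: mobius_def mat_def)

lemma mobius_matrix_inv:
  assumes "A \<in> SL2" "z \<in> upper_half_plane"
  shows "mobius (matrix_inv A) (mobius A z) = z" "mobius A (mobius (matrix_inv A) z) = z"
  using mobius_mult[OF assms, of "matrix_inv A"] mobius_mult[OF SL2_matrix_inv(3)[OF assms(1)] assms(2), of A]
  by (simp_all add: SL2_matrix_inv[OF assms(1)] mobius_id)

lemma continuous_on_mobius: "A \<in> SL2 \<Longrightarrow> continuous_on upper_half_plane (mobius A)"
  unfolding mobius_def by (intro continuous_intros) (use mobius_denom_nonzero in auto)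

lemma mobius_image_eq_preimage:
  assumes "A \<in> SL2" "F \<subseteq> upper_half_plane"
  shows "mobius A ` F = upper_half_plane \<inter> mobius (matrix_inv A) -` F"
proof -
  note inv = SL2_matrix_inv(3)[OF assms(1)]
  have "mobius A ` F \<subseteq> upper_half_plane \<inter> mobius (matrix_inv A) -` F"
    using assms by (auto simp: mobius_matrix_inv mobius_in_upper_half_plane)
  moreover have "w \<in> mobius A ` F"
    if "w \<in> upper_half_plane" "mobius (matrix_inv A) w \<in> F" for w
    using that mobius_matrix_inv(2)[OF assms(1) that(1)] by (metis image_eqI)
  ultimately show ?thesis by blast
qed

lemma closedin_mobius_image:
  assumes "A \<in> SL2" "F \<subseteq> upper_half_plane" "closedin (top_of_set upper_half_plane) F"
  shows "closedin (top_of_set upper_half_plane) (mobius A ` F)"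
proof -
  obtain C where "closed C" "F = upper_half_plane \<inter> C"
    using assms(3) by (auto simp: closedin_closed)
  then have "mobius A ` F = upper_half_plane \<inter> mobius (matrix_inv A) -` C"
    using mobius_image_eq_preimage[OF assms(1,2)] mobius_in_upper_half_plane[OF SL2_matrix_inv(3)[OF assms(1)]]
    by auto
  then show ?thesis
    using continuous_closedin_preimage[OF continuous_on_mobius[OF SL2_matrix_inv(3)[OF assms(1)]] \<open>closed C\<close>]
    by simp
qed

lemma non_elliptic_fixpoint_imp_pm_mat1:
  assumes "A \<in> SL2" "\<not> elliptic A" "z \<in> upper_half_plane" "mobius A z = z"
  shows "A = mat 1 \<or> A = - mat 1"
proof -
  define a b c d where "a = A$1$1" "b = A$1$2" "c = A$2$1" "d = A$2$2"
  define x y where "x = Re z" "y = Im z"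
  have det: "a * d - b * c = 1" using assms(1) by (simp add: SL2_def det_2 a_b_c_d_def)
  have tr: "\<not> \<bar>a + d\<bar> < 2" using assms(2) by (simp add: elliptic_def trace_2 a_b_c_d_def)
  have "y > 0" using assms(3) by (simp add: upper_half_plane_def x_y_def)
  have "complex_of_real c * z + complex_of_real d \<noteq> 0"
    using mobius_denom_nonzero[OF assms(1,3)] by (simp add: a_b_c_d_def)
  then have "complex_of_real a * z + complex_of_real b = z * (complex_of_real c * z + complex_of_real d)"
    using assms(4) by (simp add: mobius_def a_b_c_d_def divide_eq_eq mult.commute)
  then have re: "a * x + b = c * (x^2 - y^2) + d * x" and im: "a * y = 2 * c * x * y + d * y"
    by (auto simp: complex_eq_iff x_y_def power2_eq_square algebra_simps)
  from im \<open>y > 0\<close> have ad: "a = 2 * c * x + d"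
    by (metis distrib_right less_irrefl mult_cancel_right)
  have bc: "b = - c * (x^2 + y^2)" using re ad by (simp add: algebra_simps power2_eq_square)
  have "(a + d)^2 = 4 - 4 * (c * y)^2"
    using det ad bc by (simp add: power2_eq_square algebra_simps)
  moreover have "2^2 \<le> (a + d)^2" using tr abs_le_square_iff[of 2 "a + d"] by simp
  ultimately have "c * y = 0" by simp
  then have "c = 0" using \<open>y > 0\<close> by simp
  with ad bc det have "a = d" "b = 0" "a * a = 1" by auto
  then have "a = 1 \<or> a = -1" by (metis square_eq_1_iff)
  then show ?thesis using \<open>a = d\<close> \<open>b = 0\<close> \<open>c = 0\<close>
    by (auto simp: vec_eq_iff forall_2 mat_def a_b_c_d_def)
qed

lemma non_elliptic_same_image_imp_pm:
  assumes G: "psl2_subgroup G" "\<forall>C\<in>G. \<not> elliptic C"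
    and "A \<in> G" "B \<in> G" "z \<in> upper_half_plane" "mobius A z = mobius B z"
  shows "A = B \<or> A = - B"
proof -
  note SL = psl2_subgroupD(1)[OF G(1)]
  define C where "C = matrix_inv B ** A"
  have "C \<in> G" unfolding C_def using assms by (simp add: psl2_subgroupD)
  have "mobius C z = mobius (matrix_inv B) (mobius B z)"
    using assms SL by (auto simp: C_def mobius_mult)
  also have "\<dots> = z" using assms SL by (auto simp: mobius_matrix_inv)
  finally have "mobius C z = z" .
  then have "C = mat 1 \<or> C = - mat 1"
    using non_elliptic_fixpoint_imp_pm_mat1 \<open>C \<in> G\<close> SL G(2) assms(5) by blast
  moreover have "B ** C = A"
    using SL assms(4) by (auto simp: C_def matrix_mul_assoc SL2_matrix_inv)
  ultimately show ?thesis using mult_neg_mat1[of B] by auto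
qed

lemma hdist_self: "hdist p p = 0"
  by (simp add: hdist_def)

lemma hdist_nonneg:
  assumes "p \<in> upper_half_plane" "w \<in> upper_half_plane"
  shows "hdist p w \<ge> 0"
proof -
  have "Im p > 0" "Im w > 0" using assms by (auto simp: upper_half_plane_def)
  then have "(cmod (p - w))^2 / (2 * Im p * Im w) \<ge> 0" by simp
  then show ?thesis unfolding hdist_def by simp
qed

lemma hdist_eq_0_imp_eq:
  assumes "p \<in> upper_half_plane" "w \<in> upper_half_plane" "hdist p w = 0"
  shows "p = w"
proof -
  have "Im p > 0" "Im w > 0" using assms by (auto simp: upper_half_plane_def)
  then have "(cmod (p - w))^2 / (2 * Im p * Im w) \<ge> 0" by simp
  then have "1 + (cmod (p - w))^2 / (2 * Im p * Im w) = 1"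
    using assms(3) unfolding hdist_def by simp
  then have "(cmod (p - w))^2 = 0" using \<open>Im p > 0\<close> \<open>Im w > 0\<close> by simp
  then show ?thesis by simp
qed

definition neighbours :: "mat2 set \<Rightarrow> complex set \<Rightarrow> mat2 set" where
  "neighbours G F = {A\<in>G. mobius A ` F \<inter> F \<noteq> {}}"

lemma locally_finite_fd_translates_near:
  assumes G: "psl2_subgroup G" and lf: "locally_finite_fd G F" and a: "a \<in> upper_half_plane"
  obtains e where "e > 0" "ball a e \<subseteq> upper_half_plane"
    "\<And>x A. x \<in> ball a e \<Longrightarrow> A \<in> G \<Longrightarrow> x \<in> mobius A ` F \<Longrightarrow> a \<in> mobius A ` F"
proof -
  let ?H = upper_half_plane
  have F: "F \<subseteq> ?H" "closedin (top_of_set ?H) F"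
    using lf by (auto simp: locally_finite_fd_def fundamental_domain_def)
  have "open ?H" unfolding upper_half_plane_def by (rule open_halfspace_Im_gt)
  then obtain r where r: "r > 0" "cball a r \<subseteq> ?H" using a open_contains_cball by blast
  \<comment> \<open>the finitely many translates meeting \<open>cball a r\<close> but missing \<open>a\<close> stay away from \<open>a\<close>\<close>
  define T where "T = {A\<in>G. mobius A ` F \<inter> cball a r \<noteq> {} \<and> a \<notin> mobius A ` F}"
  define C where "C = (\<Union>A\<in>T. mobius A ` F)"
  have "finite {A\<in>G. mobius A ` F \<inter> cball a r \<noteq> {}}"
    using lf r(2) by (simp add: locally_finite_fd_def)
  then have "finite T" unfolding T_def by (rule rev_finite_subset) blast
  have "closedin (top_of_set ?H) (mobius A ` F)" if "A \<in> T" for A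
    using that psl2_subgroupD(1)[OF G] F by (intro closedin_mobius_image) (auto simp: T_def)
  with \<open>finite T\<close> have "closedin (top_of_set ?H) C"
    unfolding C_def by (intro closedin_Union finite_imageI) auto
  then have "openin (top_of_set ?H) (?H - C)" by (simp add: openin_diff)
  moreover have "a \<in> ?H - C" using a by (auto simp: C_def T_def)
  ultimately obtain e' where e': "e' > 0" "ball a e' \<inter> ?H \<subseteq> ?H - C"
    by (auto simp: openin_contains_ball)
  show ?thesis
  proof
    show "min r e' > 0" using r e' by simp
    have "ball a (min r e') \<subseteq> cball a r" by auto
    then show "ball a (min r e') \<subseteq> ?H" using r by blast
    fix x A assume x: "x \<in> ball a (min r e')" "A \<in> G" "x \<in> mobius A ` F"
    show "a \<in> mobius A ` F"
    proof (rule ccontr)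
      assume "a \<notin> mobius A ` F"
      moreover have "x \<in> cball a r" using x(1) by simp
      ultimately have "A \<in> T" unfolding T_def using x(2,3) by blast
      then have "x \<in> C" using x(3) by (auto simp: C_def)
      moreover have "x \<in> ball a e' \<inter> ?H" using x(1) r by auto
      ultimately show False using e' by auto
    qed
  qed
qed

lemma translates_meet_imp_neighbour:
  assumes G: "psl2_subgroup G" and F: "F \<subseteq> upper_half_plane"
    and "A \<in> G" "B \<in> G" "z \<in> mobius A ` F" "z \<in> mobius B ` F"
  shows "matrix_inv A ** B \<in> neighbours G F"
proof -
  note SL = psl2_subgroupD(1)[OF G]
  obtain p q where p: "p \<in> F" "mobius A p = z" and q: "q \<in> F" "mobius B q = z"
    using assms(5,6) by (metis imageE)
  have pq: "p \<in> upper_half_plane" "q \<in> upper_half_plane" using p q F by auto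
  have "mobius (matrix_inv A ** B) q = mobius (matrix_inv A) (mobius B q)"
    using SL assms(4) pq by (auto intro: mobius_mult)
  also have "\<dots> = mobius (matrix_inv A) (mobius A p)" using p q by simp
  also have "\<dots> = p" using SL assms(3) pq by (auto intro: mobius_matrix_inv)
  finally have "mobius (matrix_inv A ** B) q = p" .
  moreover have "matrix_inv A ** B \<in> G" using assms(3,4) by (intro psl2_subgroupD(4,5)[OF G])
  ultimately show ?thesis using p(1) q(1) unfolding neighbours_def by blast
qed

lemma neighbours_generate:
  assumes G: "psl2_subgroup G" and lf: "locally_finite_fd G F"
  shows "G \<subseteq> generated (neighbours G F)"
proof
  let ?H = upper_half_plane and ?N = "generated (neighbours G F)"
  note SL = psl2_subgroupD(1)[OF G]
  have F: "F \<subseteq> ?H" and cover: "(\<Union>A\<in>G. mobius A ` F) = ?H"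
    using lf by (auto simp: locally_finite_fd_def fundamental_domain_def)
  have NG: "?N \<subseteq> G" by (rule generated_subset[OF G]) (auto simp: neighbours_def)
  define P where "P z \<longleftrightarrow> (\<exists>A\<in>?N. z \<in> mobius A ` F)" for z
  have P_iff: "P z \<longleftrightarrow> B \<in> ?N" if B: "B \<in> G" "z \<in> mobius B ` F" for B z
  proof
    assume "P z"
    then obtain A where A: "A \<in> ?N" "z \<in> mobius A ` F" unfolding P_def by blast
    have "A \<in> G" using A(1) NG by blast
    then have "matrix_inv A ** B \<in> neighbours G F"
      using translates_meet_imp_neighbour[OF G F] A(2) B by blast
    with A(1) have "A ** (matrix_inv A ** B) \<in> ?N" by (rule generated.gen_mult)
    moreover have "A ** (matrix_inv A ** B) = B"
      using \<open>A \<in> G\<close> SL by (auto simp: matrix_mul_assoc SL2_matrix_inv)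
    ultimately show "B \<in> ?N" by simp
  next
    assume "B \<in> ?N"
    with B(2) show "P z" unfolding P_def by blast
  qed
  have "P constant_on ?H"
  proof (rule locally_constant_imp_constant)
    show "connected ?H" unfolding upper_half_plane_def
      by (intro convex_connected convex_halfspace_Im_gt)
    fix a assume "a \<in> ?H"
    obtain e where e: "e > 0" "ball a e \<subseteq> ?H"
      and near: "\<And>x A. x \<in> ball a e \<Longrightarrow> A \<in> G \<Longrightarrow> x \<in> mobius A ` F \<Longrightarrow> a \<in> mobius A ` F"
      using locally_finite_fd_translates_near[OF G lf \<open>a \<in> ?H\<close>] by blast
    have "P x = P a" if x: "x \<in> ball a e" for x
    proof -
      have "x \<in> (\<Union>A\<in>G. mobius A ` F)" using x e(2) cover by blast
      then obtain A where A: "A \<in> G" "x \<in> mobius A ` F" by blast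
      with near[OF x] have "a \<in> mobius A ` F" by blast
      then show ?thesis using P_iff[OF A] P_iff[OF A(1)] by blast
    qed
    moreover have "openin (top_of_set ?H) (ball a e)" using e(2) by (simp add: open_subset)
    moreover have "a \<in> ball a e" using e(1) by simp
    ultimately show "\<exists>T. openin (top_of_set ?H) T \<and> a \<in> T \<and> (\<forall>x\<in>T. P x = P a)"
      by blast
  qed
  have "\<i> \<in> ?H" by (simp add: upper_half_plane_def)
  then obtain f where "f \<in> F" using cover by blast
  then have "f \<in> mobius (mat 1) ` F" by (simp add: mobius_id)
  then have "P f" unfolding P_def using generated.gen_one by blast
  fix g assume "g \<in> G"
  have "f \<in> ?H" "mobius g f \<in> ?H"
    using \<open>f \<in> F\<close> \<open>g \<in> G\<close> F SL by (auto intro: mobius_in_upper_half_plane)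
  with \<open>P constant_on ?H\<close> have "P (mobius g f) = P f" unfolding constant_on_def by blast
  with \<open>P f\<close> have "P (mobius g f)" by blast
  then show "g \<in> ?N" using P_iff[OF \<open>g \<in> G\<close>] \<open>f \<in> F\<close> by blast
qed

lemma geodesic_cover_neighbours:
  assumes G: "psl2_subgroup G" "\<forall>A\<in>G. \<not> elliptic A"
    and F: "F \<subseteq> upper_half_plane" and "finite G0" and gc: "geodesic_cover G F G0"
  shows "neighbours G F \<subseteq> G0 \<union> uminus ` G0"
proof
  note SL = psl2_subgroupD(1)[OF G(1)]
  fix M assume "M \<in> neighbours G F"
  then obtain p q where M: "M \<in> G" and "p \<in> F" "q \<in> F" "mobius M q = p"
    by (auto simp: neighbours_def)
  then have pq: "p \<in> upper_half_plane" "q \<in> upper_half_plane" using F by auto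
  define d where "d A = hdist p (mobius A q)" for A
  have G0: "G0 \<subseteq> G" "G0 \<noteq> {}" using gc by (auto simp: geodesic_cover_def)
  have bdd: "bdd_below (d ` G)"
    by (rule bdd_belowI[of _ 0])
      (use pq SL in \<open>auto simp: d_def intro!: hdist_nonneg mobius_in_upper_half_plane\<close>)
  have "Min (d ` G0) = (INF A\<in>G0. d A)" using \<open>finite G0\<close> G0 by (simp add: cInf_eq_Min)
  also have "\<dots> = (INF A\<in>G. d A)"
    using gc \<open>p \<in> F\<close> \<open>q \<in> F\<close> unfolding geodesic_cover_def d_def by simp
  also have "\<dots> \<le> d M" using bdd M by (rule cINF_lower)
  also have "d M = 0" using \<open>mobius M q = p\<close> by (simp add: d_def hdist_self)
  finally have "Min (d ` G0) \<le> 0" .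
  moreover have "Min (d ` G0) \<in> d ` G0" using \<open>finite G0\<close> G0 by (intro Min_in) auto
  ultimately obtain A0 where A0: "A0 \<in> G0" "d A0 \<le> 0" by auto
  have "A0 \<in> G" using A0(1) G0(1) by blast
  then have A0_q: "mobius A0 q \<in> upper_half_plane"
    using SL pq by (auto intro: mobius_in_upper_half_plane)
  then have "hdist p (mobius A0 q) = 0"
    using A0(2) hdist_nonneg[OF pq(1)] by (simp add: d_def order_antisym)
  then have "mobius A0 q = mobius M q"
    using hdist_eq_0_imp_eq[OF pq(1) A0_q] \<open>mobius M q = p\<close> by simp
  then have "M = A0 \<or> M = - A0"
    using non_elliptic_same_image_imp_pm[OF G M \<open>A0 \<in> G\<close> pq(2)] by simp
  then show "M \<in> G0 \<union> uminus ` G0" using A0 by auto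
qed

theorem corollary2p6:
  fixes G :: "mat2 set"
  assumes "fuchsian G"
    and "\<not> finitely_generated_psl G"
    and "\<forall>A\<in>G. \<not> elliptic A"
  shows "\<not> (\<exists>F G0. locally_finite_fd G F \<and> finite G0 \<and> geodesic_cover G F G0)"
proof
  assume "\<exists>F G0. locally_finite_fd G F \<and> finite G0 \<and> geodesic_cover G F G0"
  then obtain F G0 where lf: "locally_finite_fd G F" and "finite G0" and gc: "geodesic_cover G F G0"
    by blast
  have G: "psl2_subgroup G" using assms(1) by (simp add: fuchsian_def)
  define S where "S = G0 \<union> uminus ` G0"
  have "finite S" using \<open>finite G0\<close> by (simp add: S_def)
  have "S \<subseteq> G"
    using gc psl2_subgroup_uminus[OF G] by (auto simp: S_def geodesic_cover_def)
  have "neighbours G F \<subseteq> S"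
    unfolding S_def using lf gc \<open>finite G0\<close> assms(3)
    by (intro geodesic_cover_neighbours[OF G]) (auto simp: locally_finite_fd_def fundamental_domain_def)
  then have "G \<subseteq> generated (insert (- mat 1) S)"
    using neighbours_generate[OF G lf] generated_mono[of "neighbours G F" "insert (- mat 1) S"] by blast
  moreover have "generated (insert (- mat 1) S) \<subseteq> G"
    using generated_subset[OF G] \<open>S \<subseteq> G\<close> psl2_subgroupD(3)[OF G] by blast
  ultimately have "finitely_generated_psl G"
    unfolding finitely_generated_psl_def using \<open>finite S\<close> \<open>S \<subseteq> G\<close> by blast
  with assms(2) show False by contradiction
qed

end
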